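(* Let $\mathfrak{g}_{(1,0,0,1)}$ be the real Lie algebra with basis $e_1,\dots,e_6$ and nonzero brackets $[e_1,e_5]=e_2$, $[e_2,e_5]=-e_1$, $[e_3,e_6]=e_4$, $[e_4,e_6]=-e_3$. Every derivation $D$ of $\mathfrak{g}_{(1,0,0,1)}$ has the form $De_1=d_{11}e_1-d_{12}e_2$, $De_2=d_{12}e_1+d_{11}e_2$, $De_3=d_{33}e_3-d_{34}e_4$, $De_4=d_{34}e_3+d_{33}e_4$, $De_5=d_{15}e_1+d_{25}e_2$, $De_6=d_{36}e_3+d_{46}e_4$ with $d_{ij}\in\mathbb{R}$. Moreover, for $\eta>0$ and $\omega_\eta=e^{12}+e^{34}+\eta e^{56}$, any derivation $D$ for which there is $\lambda\in\mathfrak{g}_{(1,0,0,1)}^*$ with $\omega_{\eta,D,D}=-d\lambda$ is an inner derivation of $\mathfrak{g}_{(1,0,0,1)}$.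
   Context: $e^{ij}=e^i\wedge e^j$ in the dual basis. For a 2-form $\varphi$ and endomorphism $D$, $\varphi_D(x,y)=\varphi(Dx,y)+\varphi(x,Dy)$, and $\omega_{\eta,D,D}=((\omega_\eta)_D)_D$. $d\lambda(x,y)=-\lambda([x,y])$. An inner derivation is one of the form $\mathrm{ad}_x$. *)

theory Defs
  imports "HOL-Analysis.Analysis"
begin

text \<open>The underlying vector space is real^6; the basis vector e_k is axis k 1
  (indices of type 6 are written 1,...,6; note 6 = 0 in that type, which is harmless).\<close>

definition e :: "6 \<Rightarrow> real^6" where
  "e k = axis k 1"

definition brb :: "6 \<Rightarrow> 6 \<Rightarrow> real^6" where
  "brb i j =
     (if i = 1 \<and> j = 5 then e 2
      else if i = 5 \<and> j = 1 then - e 2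
      else if i = 2 \<and> j = 5 then - e 1
      else if i = 5 \<and> j = 2 then e 1
      else if i = 3 \<and> j = 6 then e 4
      else if i = 6 \<and> j = 3 then - e 4
      else if i = 4 \<and> j = 6 then - e 3
      else if i = 6 \<and> j = 4 then e 3
      else 0)"

definition br :: "real^6 \<Rightarrow> real^6 \<Rightarrow> real^6" where
  "br x y = (\<Sum>i\<in>UNIV. \<Sum>j\<in>UNIV. (x$i * y$j) *\<^sub>R brb i j)"

definition is_derivation :: "(real^6 \<Rightarrow> real^6) \<Rightarrow> bool" where
  "is_derivation D \<longleftrightarrow> linear D \<and> (\<forall>x y. D (br x y) = br (D x) y + br x (D y))"

definition is_inner_derivation :: "(real^6 \<Rightarrow> real^6) \<Rightarrow> bool" where
  "is_inner_derivation D \<longleftrightarrow> (\<exists>x. D = (\<lambda>y. br x y))"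

text \<open>Dual basis e^i and e^{ij} = e^i \<and> e^j (determinant convention).\<close>

definition ew :: "6 \<Rightarrow> 6 \<Rightarrow> real^6 \<Rightarrow> real^6 \<Rightarrow> real" where
  "ew i j x y = x$i * y$j - x$j * y$i"

definition omega :: "real \<Rightarrow> real^6 \<Rightarrow> real^6 \<Rightarrow> real" where
  "omega \<eta> x y = ew 1 2 x y + ew 3 4 x y + \<eta> * ew 5 6 x y"

definition formD :: "(real^6 \<Rightarrow> real^6 \<Rightarrow> real) \<Rightarrow> (real^6 \<Rightarrow> real^6) \<Rightarrow> real^6 \<Rightarrow> real^6 \<Rightarrow> real" where
  "formD \<phi> D x y = \<phi> (D x) y + \<phi> x (D y)"

definition dform :: "(real^6 \<Rightarrow> real) \<Rightarrow> real^6 \<Rightarrow> real^6 \<Rightarrow> real" where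
  "dform lam x y = - lam (br x y)"

end

theory Submission
  imports Defs
begin

text \<open>The derivation identity evaluated on the pairs of basis vectors is a linear system in the
  36 matrix entries of D; solving it gives the stated normal form. For the second claim, D
  preserves the planes spanned by e1, e2 and by e3, e4, acting on each as a rotation-dilation with
  trace 2 d11, resp. 2 d33. Since both planes are abelian, evaluating the identity on (e1, e2) and
  (e3, e4) gives (2 d11)^2 = 0 and (2 d33)^2 = 0. The remaining derivations are exactly the
  inner ones, with ad_x matching D for x = d25 e1 - d15 e2 + d46 e3 - d36 e4 + d12 e5 + d34 e6.\<close>

lemma UNIV_6: "(UNIV :: 6 set) = {1, 2, 3, 4, 5, 6}"
proof -
  have "x \<in> {1, 2, 3, 4, 5, 6}" for x :: 6
  proof (induct x)
    case (of_int z)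
    then have "z \<in> {0, 1, 2, 3, 4, 5}" by fastforce
    then show ?case by auto
  qed
  then show ?thesis by blast
qed

lemma sum_UNIV_6: "sum f (UNIV :: 6 set) = f 1 + f 2 + f 3 + f 4 + f 5 + f 6"
  unfolding UNIV_6 by (simp add: algebra_simps)

lemma all_6: "(\<forall>i::6. P i) \<longleftrightarrow> P 1 \<and> P 2 \<and> P 3 \<and> P 4 \<and> P 5 \<and> P 6"
  using UNIV_6 by (metis UNIV_I insertE singletonD)

lemma e_nth: "e j $ k = (if k = j then 1 else 0)"
  by (simp add: e_def axis_def)

lemma Basis_real_6: "(Basis :: (real^6) set) = range e"
  by (auto simp: Basis_vec_def e_def)

lemma br_nth:
  "br x y $ k =
     (if k = 1 then x$5 * y$2 - x$2 * y$5
      else if k = 2 then x$1 * y$5 - x$5 * y$1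
      else if k = 3 then x$6 * y$4 - x$4 * y$6
      else if k = 4 then x$3 * y$6 - x$6 * y$3
      else 0)"
  unfolding br_def sum_UNIV_6 using UNIV_6
  by (auto simp: brb_def e_nth)

lemma br_e_e: "br (e i) (e j) = brb i j"
proof -
  have "(e i $ a * e j $ b) *\<^sub>R brb a b = (if b = j then if a = i then brb a b else 0 else 0)"
    for a b
    by (simp add: e_nth)
  then show ?thesis unfolding br_def by simp
qed

lemma linear_br: "linear (br x)"
  by (rule linearI) (auto simp: vec_eq_iff all_6 br_nth algebra_simps)

lemma dform_eq_0_if_br_eq_0: "linear lam \<Longrightarrow> br x y = 0 \<Longrightarrow> dform lam x y = 0"
  by (simp add: dform_def linear_0)

lemma is_derivation_on_basis:
  "is_derivation D \<Longrightarrow> D (brb i j) = br (D (e i)) (e j) + br (e i) (D (e j))"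
  unfolding is_derivation_def by (metis br_e_e)

lemma is_derivation_normal_form:
  assumes "is_derivation D"
  shows "\<exists>d11 d12 d33 d34 d15 d25 d36 d46 :: real.
           D (e 1) = d11 *\<^sub>R e 1 - d12 *\<^sub>R e 2 \<and>
           D (e 2) = d12 *\<^sub>R e 1 + d11 *\<^sub>R e 2 \<and>
           D (e 3) = d33 *\<^sub>R e 3 - d34 *\<^sub>R e 4 \<and>
           D (e 4) = d34 *\<^sub>R e 3 + d33 *\<^sub>R e 4 \<and>
           D (e 5) = d15 *\<^sub>R e 1 + d25 *\<^sub>R e 2 \<and>
           D (e 6) = d36 *\<^sub>R e 3 + d46 *\<^sub>R e 4"
proof -
  have "linear D" using assms unfolding is_derivation_def by blast
  then have [simp]: "D (- x) = - D x" "D 0 = 0" for x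
    by (simp_all add: linear_neg linear_0)
  have basis_eq: "D (brb i j) $ k = br (D (e i)) (e j) $ k + br (e i) (D (e j)) $ k" for i j k
    using is_derivation_on_basis[OF assms] by simp
  note pairs = basis_eq[of 1 2] basis_eq[of 1 3] basis_eq[of 1 4] basis_eq[of 1 5] basis_eq[of 1 6]
    basis_eq[of 2 3] basis_eq[of 2 4] basis_eq[of 2 5] basis_eq[of 2 6] basis_eq[of 3 4]
    basis_eq[of 3 5] basis_eq[of 3 6] basis_eq[of 4 5] basis_eq[of 4 6] basis_eq[of 5 6]
  note equations = pairs[of 1] pairs[of 2] pairs[of 3] pairs[of 4] pairs[of 5] pairs[of 6]
  note linear_system = equations[unfolded brb_def, simplified e_nth br_nth vector_add_component,
      simplified]
  have "D (e 1) = D (e 1) $ 1 *\<^sub>R e 1 - D (e 2) $ 1 *\<^sub>R e 2 \<and>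
        D (e 2) = D (e 2) $ 1 *\<^sub>R e 1 + D (e 1) $ 1 *\<^sub>R e 2 \<and>
        D (e 3) = D (e 3) $ 3 *\<^sub>R e 3 - D (e 4) $ 3 *\<^sub>R e 4 \<and>
        D (e 4) = D (e 4) $ 3 *\<^sub>R e 3 + D (e 3) $ 3 *\<^sub>R e 4 \<and>
        D (e 5) = D (e 5) $ 1 *\<^sub>R e 1 + D (e 5) $ 2 *\<^sub>R e 2 \<and>
        D (e 6) = D (e 6) $ 3 *\<^sub>R e 3 + D (e 6) $ 4 *\<^sub>R e 4"
    unfolding vec_eq_iff all_6 by (simp add: e_nth) (intro conjI; use linear_system in linarith)
  then show ?thesis by blast
qed

lemma formD_formD_omega_e1_e2:
  assumes "linear D"
    and "D (e 1) = a *\<^sub>R e 1 - b *\<^sub>R e 2" and "D (e 2) = b *\<^sub>R e 1 + a *\<^sub>R e 2"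
  shows "formD (formD (omega \<eta>) D) D (e 1) (e 2) = (2 * a)^2"
  by (simp add: assms formD_def omega_def ew_def e_nth linear_diff linear_add linear_scale
      power2_eq_square algebra_simps)

lemma formD_formD_omega_e3_e4:
  assumes "linear D"
    and "D (e 3) = c *\<^sub>R e 3 - d *\<^sub>R e 4" and "D (e 4) = d *\<^sub>R e 3 + c *\<^sub>R e 4"
  shows "formD (formD (omega \<eta>) D) D (e 3) (e 4) = (2 * c)^2"
  by (simp add: assms formD_def omega_def ew_def e_nth linear_diff linear_add linear_scale
      power2_eq_square algebra_simps)

lemma eq_br_if_traceless_normal_form:
  assumes "linear D"
    and "D (e 1) = - (b *\<^sub>R e 2)" and "D (e 2) = b *\<^sub>R e 1"
    and "D (e 3) = - (d *\<^sub>R e 4)" and "D (e 4) = d *\<^sub>R e 3"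
    and "D (e 5) = p *\<^sub>R e 1 + q *\<^sub>R e 2" and "D (e 6) = r *\<^sub>R e 3 + s *\<^sub>R e 4"
  shows "D = br (q *\<^sub>R e 1 - p *\<^sub>R e 2 + s *\<^sub>R e 3 - r *\<^sub>R e 4 + b *\<^sub>R e 5 + d *\<^sub>R e 6)"
    (is "D = br ?x")
proof -
  have "\<forall>i. D (e i) = br ?x (e i)"
    unfolding all_6 using assms by (simp add: vec_eq_iff all_6 br_nth e_nth)
  then show ?thesis
    by (intro linear_eq_stdbasis[OF assms(1) linear_br]) (auto simp: Basis_real_6)
qed

lemma is_inner_derivation_if_formD_formD_omega_exact:
  assumes der: "is_derivation D" and "linear lam"
    and exact: "\<And>x y. formD (formD (omega \<eta>) D) D x y = - dform lam x y"
  shows "is_inner_derivation D"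
proof -
  have lin: "linear D" using der by (simp add: is_derivation_def)
  obtain d11 d12 d33 d34 d15 d25 d36 d46 where
    D12: "D (e 1) = d11 *\<^sub>R e 1 - d12 *\<^sub>R e 2" "D (e 2) = d12 *\<^sub>R e 1 + d11 *\<^sub>R e 2" and
    D34: "D (e 3) = d33 *\<^sub>R e 3 - d34 *\<^sub>R e 4" "D (e 4) = d34 *\<^sub>R e 3 + d33 *\<^sub>R e 4" and
    D56: "D (e 5) = d15 *\<^sub>R e 1 + d25 *\<^sub>R e 2" "D (e 6) = d36 *\<^sub>R e 3 + d46 *\<^sub>R e 4"
    using is_derivation_normal_form[OF der] by blast
  have "(2 * d11)^2 = 0"
    using exact[of "e 1" "e 2"] formD_formD_omega_e1_e2[OF lin D12]
      dform_eq_0_if_br_eq_0[OF \<open>linear lam\<close>] by (simp add: br_e_e brb_def)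
  moreover have "(2 * d33)^2 = 0"
    using exact[of "e 3" "e 4"] formD_formD_omega_e3_e4[OF lin D34]
      dform_eq_0_if_br_eq_0[OF \<open>linear lam\<close>] by (simp add: br_e_e brb_def)
  ultimately have "D = br (d25 *\<^sub>R e 1 - d15 *\<^sub>R e 2 + d46 *\<^sub>R e 3 - d36 *\<^sub>R e 4
      + d12 *\<^sub>R e 5 + d34 *\<^sub>R e 6)"
    using D12 D34 by (intro eq_br_if_traceless_normal_form[OF lin _ _ _ _ D56]) simp_all
  then show ?thesis unfolding is_inner_derivation_def by blast
qed

theorem lemma4p8:
  shows "(\<forall>D. is_derivation D \<longrightarrow>
            (\<exists>d11 d12 d33 d34 d15 d25 d36 d46 :: real.
               D (e 1) = d11 *\<^sub>R e 1 - d12 *\<^sub>R e 2 \<and>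
               D (e 2) = d12 *\<^sub>R e 1 + d11 *\<^sub>R e 2 \<and>
               D (e 3) = d33 *\<^sub>R e 3 - d34 *\<^sub>R e 4 \<and>
               D (e 4) = d34 *\<^sub>R e 3 + d33 *\<^sub>R e 4 \<and>
               D (e 5) = d15 *\<^sub>R e 1 + d25 *\<^sub>R e 2 \<and>
               D (e 6) = d36 *\<^sub>R e 3 + d46 *\<^sub>R e 4))
       \<and> (\<forall>\<eta>::real. \<forall>D. \<eta> > 0 \<longrightarrow> is_derivation D \<longrightarrow>
            (\<exists>lam. linear lam \<and>
                (\<forall>x y. formD (formD (omega \<eta>) D) D x y = - dform lam x y)) \<longrightarrow>
            is_inner_derivation D)"
  using is_derivation_normal_form is_inner_derivation_if_formD_formD_omega_exact by blast

end
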